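(* Let $h\ge 0$ be an integer and let $G$ be an $h$-almost-bipartite graph on $n$ vertices. Then $G$ contains at most $2^h n^2+2$ cliques.
   Context: Graphs are simple, finite and undirected. A clique is a set of pairwise adjacent vertices (the empty set and single vertices count). A graph $G$ is $h$-almost bipartite if $G-A$ is bipartite for some set $A\subseteq V(G)$ with $|A|\le h$. *)

theory Defs
  imports Main
begin

definition simple_graph :: "'a set \<Rightarrow> ('a \<Rightarrow> 'a \<Rightarrow> bool) \<Rightarrow> bool" where
  "simple_graph V E \<longleftrightarrow> finite V \<and> (\<forall>u v. E u v \<longrightarrow> u \<in> V \<and> v \<in> V)
     \<and> (\<forall>u v. E u v \<longrightarrow> E v u) \<and> (\<forall>v. \<not> E v v)"

definition is_clique :: "'a set \<Rightarrow> ('a \<Rightarrow> 'a \<Rightarrow> bool) \<Rightarrow> 'a set \<Rightarrow> bool" where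
  "is_clique V E K \<longleftrightarrow> K \<subseteq> V \<and> (\<forall>u\<in>K. \<forall>v\<in>K. u \<noteq> v \<longrightarrow> E u v)"

definition cliques :: "'a set \<Rightarrow> ('a \<Rightarrow> 'a \<Rightarrow> bool) \<Rightarrow> 'a set set" where
  "cliques V E = {K. is_clique V E K}"

definition bipartite_on :: "'a set \<Rightarrow> ('a \<Rightarrow> 'a \<Rightarrow> bool) \<Rightarrow> bool" where
  "bipartite_on W E \<longleftrightarrow> (\<exists>X Y. X \<union> Y = W \<and> X \<inter> Y = {}
      \<and> (\<forall>u\<in>X. \<forall>v\<in>X. \<not> E u v) \<and> (\<forall>u\<in>Y. \<forall>v\<in>Y. \<not> E u v))"

definition almost_bipartite :: "nat \<Rightarrow> 'a set \<Rightarrow> ('a \<Rightarrow> 'a \<Rightarrow> bool) \<Rightarrow> bool" where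
  "almost_bipartite h V E \<longleftrightarrow> (\<exists>A. A \<subseteq> V \<and> card A \<le> h \<and> bipartite_on (V - A) E)"

end

theory Submission
  imports Defs
begin

text \<open>A clique meets each side of a bipartition of \<open>V - A\<close> in at most one vertex.
  Hence a clique \<open>K\<close> is determined by the pair \<open>(K \<inter> A, K - A)\<close>, where \<open>K \<inter> A\<close> is one of
  at most \<open>2^h\<close> subsets of \<open>A\<close> and \<open>K - A\<close> is a set of at most two vertices of \<open>V - A\<close>, of
  which there are at most \<open>1 + m\<^sup>2\<close> for \<open>m = |V - A|\<close>. Since \<open>1 + m\<^sup>2 \<le> n\<^sup>2\<close> as soon as
  \<open>A \<noteq> {}\<close>, this gives \<open>2^h n\<^sup>2 + 2\<close>.\<close>

lemma card_subsets_card_le_2: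
  assumes "finite W"
  shows "card {T. T \<subseteq> W \<and> card T \<le> 2} \<le> 1 + card W * card W"
proof -
  have "{T. T \<subseteq> W \<and> card T \<le> 2} \<subseteq> insert {} ((\<lambda>(x, y). {x, y}) ` (W \<times> W))"
  proof
    fix T assume "T \<in> {T. T \<subseteq> W \<and> card T \<le> 2}"
    then have T: "T \<subseteq> W" "finite T" "card T = 0 \<or> card T = 1 \<or> card T = 2"
      using assms finite_subset by auto
    then show "T \<in> insert {} ((\<lambda>(x, y). {x, y}) ` (W \<times> W))"
      by (auto simp: card_1_singleton_iff card_2_iff)
  qed
  then have "card {T. T \<subseteq> W \<and> card T \<le> 2}
      \<le> card (insert {} ((\<lambda>(x, y). {x, y}) ` (W \<times> W)))"
    using assms by (intro card_mono) auto
  also have "\<dots> \<le> Suc (card ((\<lambda>(x, y). {x, y}) ` (W \<times> W)))"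
    by (rule card_insert_le_m1) auto
  also have "card ((\<lambda>(x, y). {x, y}) ` (W \<times> W)) \<le> card (W \<times> W)"
    by (rule card_image_le) (use assms in auto)
  finally show ?thesis
    by (simp add: card_cartesian_product)
qed

lemma card_clique_inter_independent_le_1:
  assumes "is_clique V E K" and "\<forall>u\<in>I. \<forall>v\<in>I. \<not> E u v"
  shows "card (K \<inter> I) \<le> 1"
proof (cases "finite (K \<inter> I)")
  case True
  then show ?thesis
    using assms by (auto simp: One_nat_def card_le_Suc0_iff_eq is_clique_def; blast)
qed simp

lemma card_clique_diff_le_2:
  assumes "is_clique V E K" and "bipartite_on (V - A) E"
  shows "card (K - A) \<le> 2"
proof -
  obtain X Y where XY: "X \<union> Y = V - A"
      "\<forall>u\<in>X. \<forall>v\<in>X. \<not> E u v" "\<forall>u\<in>Y. \<forall>v\<in>Y. \<not> E u v"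
    using assms(2) by (auto simp: bipartite_on_def)
  have "K - A = (K \<inter> X) \<union> (K \<inter> Y)"
    using XY(1) assms(1) by (auto simp: is_clique_def)
  then have "card (K - A) \<le> card (K \<inter> X) + card (K \<inter> Y)"
    by (simp add: card_Un_le)
  then show ?thesis
    using card_clique_inter_independent_le_1[OF assms(1) XY(2)]
      card_clique_inter_independent_le_1[OF assms(1) XY(3)] by linarith
qed

lemma card_cliques_le_if_bipartite_diff:
  assumes "finite V" and "A \<subseteq> V" and "bipartite_on (V - A) E"
  shows "card (cliques V E) \<le> 2 ^ card A * (1 + card (V - A) * card (V - A))"
proof -
  define S where "S = {T. T \<subseteq> V - A \<and> card T \<le> 2}"
  have finA: "finite A"
    using assms(1,2) finite_subset by blast
  have "inj_on (\<lambda>K. (K \<inter> A, K - A)) (cliques V E)"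
    by (rule inj_onI) (metis Int_Diff_Un prod.inject)
  then have "card (cliques V E) = card ((\<lambda>K. (K \<inter> A, K - A)) ` cliques V E)"
    by (simp add: card_image)
  also have "\<dots> \<le> card (Pow A \<times> S)"
  proof (rule card_mono)
    show "finite (Pow A \<times> S)"
      using finA assms(1) by (simp add: S_def)
    show "(\<lambda>K. (K \<inter> A, K - A)) ` cliques V E \<subseteq> Pow A \<times> S"
      using card_clique_diff_le_2[OF _ assms(3)]
      by (auto simp: S_def cliques_def is_clique_def)
  qed
  also have "\<dots> = 2 ^ card A * card S"
    using finA by (simp add: card_cartesian_product card_Pow)
  also have "\<dots> \<le> 2 ^ card A * (1 + card (V - A) * card (V - A))"
    unfolding S_def using assms(1) by (intro mult_le_mono2 card_subsets_card_le_2) simp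
  finally show ?thesis .
qed

lemma pow2_mult_one_plus_square_le:
  fixes a m h :: nat
  assumes "a \<le> h"
  shows "2 ^ a * (1 + m * m) \<le> 2 ^ h * (a + m) ^ 2 + 2"
proof (cases "a = 0")
  case True
  have "m * m \<le> 2 ^ h * (m * m)"
    by simp
  then have "1 + m * m \<le> 2 ^ h * (m * m) + 2"
    by linarith
  with True show ?thesis
    by (simp add: power2_eq_square)
next
  case False
  then have "1 + m * m \<le> (a + m) * (a + m)"
    using mult_le_mono[of "m + 1" "a + m" "m + 1" "a + m"] by (simp add: algebra_simps)
  then have "2 ^ a * (1 + m * m) \<le> 2 ^ h * ((a + m) * (a + m))"
    using assms by (intro mult_le_mono) (auto intro: power_increasing)
  then show ?thesis
    by (simp add: power2_eq_square)
qed

theorem lemma8: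
  fixes V :: "'a set" and E :: "'a \<Rightarrow> 'a \<Rightarrow> bool" and h n :: nat
  assumes "simple_graph V E"
    and "card V = n"
    and "almost_bipartite h V E"
  shows "card (cliques V E) \<le> 2 ^ h * n ^ 2 + 2"
proof -
  have finV: "finite V"
    using assms(1) by (simp add: simple_graph_def)
  obtain A where A: "A \<subseteq> V" "card A \<le> h" "bipartite_on (V - A) E"
    using assms(3) by (auto simp: almost_bipartite_def)
  have n: "n = card A + card (V - A)"
    using assms(2) finV A(1) by (metis card_Diff_subset card_mono finite_subset le_add_diff_inverse)
  show ?thesis
    using card_cliques_le_if_bipartite_diff[OF finV A(1,3)]
      pow2_mult_one_plus_square_le[OF A(2), of "card (V - A)"]
    unfolding n by linarith
qed

end
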